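(* Let $q\in(0,1)$, $\alpha\in(-1,1)$ and $\beta<1$ real, $z\in\mathbb{C}\setminus\{0\}$ and $n\ge-1$. Then \begin{align*} p_n^{(\alpha,\beta)}(z+z^{-1};q)=\frac{1}{z^{-1}-z}\frac{(\alpha;q)_n}{(\beta;q)_n}\Big[&z^{-n-1}\,{}_2\phi_1\!\left(z\tau,z\tau^{-1};qz^2;q,\alpha\right){}_2\phi_1\!\left(z^{-1}\tau,z^{-1}\tau^{-1};qz^{-2};q,\alpha q^{n+1}\right)\\ &-z^{n+1}\,{}_2\phi_1\!\left(z^{-1}\tau,z^{-1}\tau^{-1};qz^{-2};q,\alpha\right){}_2\phi_1\!\left(z\tau,z\tau^{-1};qz^{2};q,\alpha q^{n+1}\right)\Big], \end{align*} where for $z\in\pm q^{\mathbb{Z}/2}$ the right-hand side is understood as the corresponding limit value.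
   Context: $(a;q)_n:=\prod_{j=0}^{n-1}(1-aq^j)$ for $n\in\mathbb{N}_0\cup\{\infty\}$, and for $n=-1$, $(a;q)_{-1}:=(1-aq^{-1})^{-1}$. The polynomials $p_n^{(\alpha,\beta)}(x;q)$ are defined by $p_{-1}=0$, $p_0=1$, $p_{n+1}(x)=xp_n(x)-\tilde\gamma_{n-1}\tilde\gamma_np_{n-1}(x)$ for $n\in\mathbb{N}_0$, where $\tilde\gamma_n=(1-\alpha q^n)/(1-\beta q^n)$. The $q$-Gauss series is ${}_2\phi_1(a,b;c;q,w)=\sum_{k\ge0}\frac{(a,b;q)_k}{(c,q;q)_k}w^k$. Here $\tau$ is any nonzero number with $\alpha(\tau+\tau^{-1})=\beta(z+z^{-1})$; the series depend only on this relation, since $\alpha^k(z\tau,z\tau^{-1};q)_k=\prod_{j=0}^{k-1}(\alpha(1+z^2q^{2j})-\beta q^j(1+z^2))$, and for $\alpha=0$ the terms are defined by this product expression. *)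

theory Defs
  imports "HOL-Analysis.Analysis"
begin

definition qpoch :: "complex \<Rightarrow> complex \<Rightarrow> nat \<Rightarrow> complex" where
  "qpoch a q n = (\<Prod>j<n. 1 - a * q ^ j)"

definition qpochZ :: "complex \<Rightarrow> complex \<Rightarrow> int \<Rightarrow> complex" where
  "qpochZ a q n = (if n \<ge> 0 then qpoch a q (nat n)
                   else if n = -1 then inverse (1 - a / q) else undefined)"

definition gt :: "real \<Rightarrow> real \<Rightarrow> real \<Rightarrow> int \<Rightarrow> real" where
  "gt \<alpha> \<beta> q n = (1 - \<alpha> * q powi n) / (1 - \<beta> * q powi n)"

text \<open>pp alpha beta q m x = p_{m-1}^{(alpha,beta)}(x;q), i.e. index shifted by one:
  pp 0 = p_{-1} = 0, pp 1 = p_0 = 1,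
  p_{k+1}(x) = x p_k(x) - gt_{k-1} gt_k p_{k-1}(x).\<close>
fun pp :: "real \<Rightarrow> real \<Rightarrow> real \<Rightarrow> nat \<Rightarrow> complex \<Rightarrow> complex" where
  "pp \<alpha> \<beta> q 0 x = 0"
| "pp \<alpha> \<beta> q (Suc 0) x = 1"
| "pp \<alpha> \<beta> q (Suc (Suc k)) x =
     x * pp \<alpha> \<beta> q (Suc k) x
     - complex_of_real (gt \<alpha> \<beta> q (int k - 1) * gt \<alpha> \<beta> q (int k)) * pp \<alpha> \<beta> q k x"

definition pol :: "int \<Rightarrow> real \<Rightarrow> real \<Rightarrow> real \<Rightarrow> complex \<Rightarrow> complex" where
  "pol n \<alpha> \<beta> q x = pp \<alpha> \<beta> q (nat (n + 1)) x"

text \<open>alpha^k (z tau, z tau^{-1}; q)_k, written via the product expression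
  (valid for any tau with alpha(tau + 1/tau) = beta(z + 1/z); used as definition also for alpha = 0).\<close>
definition apoch :: "real \<Rightarrow> real \<Rightarrow> real \<Rightarrow> complex \<Rightarrow> nat \<Rightarrow> complex" where
  "apoch \<alpha> \<beta> q z k = (\<Prod>j<k. of_real \<alpha> * (1 + z^2 * of_real q ^ (2*j))
                                 - of_real \<beta> * of_real q ^ j * (1 + z^2))"

text \<open>phi \<alpha> \<beta> q z t = 2phi1(z tau, z tau^{-1}; q z^2; q, alpha t), i.e.
  sum_k alpha^k (z tau, z tau^{-1};q)_k t^k / ((q z^2, q; q)_k).\<close>
definition phi :: "real \<Rightarrow> real \<Rightarrow> real \<Rightarrow> complex \<Rightarrow> complex \<Rightarrow> complex" where
  "phi \<alpha> \<beta> q z t = (\<Sum>k. apoch \<alpha> \<beta> q z k * t ^ k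
                       / (qpoch (of_real q * z^2) (of_real q) k * qpoch (of_real q) (of_real q) k))"

definition rhs :: "int \<Rightarrow> real \<Rightarrow> real \<Rightarrow> real \<Rightarrow> complex \<Rightarrow> complex" where
  "rhs n \<alpha> \<beta> q z =
     1 / (inverse z - z)
     * (qpochZ (of_real \<alpha>) (of_real q) n / qpochZ (of_real \<beta>) (of_real q) n)
     * ( z powi (- n - 1) * phi \<alpha> \<beta> q z 1
           * phi \<alpha> \<beta> q (inverse z) (of_real q ^ nat (n + 1))
       - z powi (n + 1) * phi \<alpha> \<beta> q (inverse z) 1
           * phi \<alpha> \<beta> q z (of_real q ^ nat (n + 1)))"

text \<open>Exceptional points: z in \<plusminus>q^{Z/2}, i.e. z^2 a (integer) power of q.\<close>
definition exceptional :: "real \<Rightarrow> complex \<Rightarrow> bool" where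
  "exceptional q z \<longleftrightarrow> (\<exists>m::int. z^2 = of_real q powi m)"

end

theory Submission
  imports Defs
begin

text \<open>
  Write \<phi>_z(t) for 2\<phi>1(z\<tau>, z/\<tau>; qz^2; q, \<alpha>t). Comparing coefficients gives its q-difference
  equation, which says that u_k = z^k \<phi>_z(q^k) and v_k = z^-k \<phi>_1/z(q^k) both solve the
  three-term recurrence (1 - \<alpha>q^k)(y_k+2 + y_k) = (z + 1/z)(1 - \<beta>q^k) y_k+1.
  Their Casoratian is therefore constant, and as \<phi>(q^k) tends to 1 it equals 1/z - z. Hence the
  solution \<phi>_z(1) v - \<phi>_1/z(1) u has initial values 0 and 1/z - z; multiplied by the gauge factor
  (\<alpha>;q)_k / (\<beta>;q)_k it satisfies the recurrence of the polynomials, which gives the identity.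
  At exceptional z the polynomial side is continuous, so it is the limit of the right-hand side.
\<close>

lemma mult_power_less_one:
  fixes x q :: real
  assumes "x < 1" "0 \<le> q" "q \<le> 1"
  shows "x * q ^ k < 1"
proof (cases "x \<le> 0")
  case True
  then have "x * q ^ k \<le> 0" using assms by (simp add: mult_nonpos_nonneg)
  then show ?thesis by linarith
next
  case False
  then have "x * q ^ k \<le> x" using assms by (simp add: mult_left_le power_le_one)
  then show ?thesis using assms by linarith
qed

lemma one_minus_of_real_mult_power_neq_zero:
  fixes x q :: real
  assumes "x < 1" "0 \<le> q" "q \<le> 1"
  shows "1 - of_real x * of_real q ^ k \<noteq> (0::complex)"
proof -
  have "1 - x * q ^ k \<noteq> 0"
    using mult_power_less_one[OF assms, of k] by linarith
  moreover have "1 - of_real x * of_real q ^ k = (of_real (1 - x * q ^ k) :: complex)"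
    by simp
  ultimately show ?thesis
    by (metis of_real_eq_0_iff)
qed

definition casoratian :: "(nat \<Rightarrow> 'a::comm_ring) \<Rightarrow> (nat \<Rightarrow> 'a) \<Rightarrow> nat \<Rightarrow> 'a" where
  "casoratian u v k = u k * v (Suc k) - u (Suc k) * v k"

definition solves_recurrence :: "(nat \<Rightarrow> 'a::comm_ring) \<Rightarrow> (nat \<Rightarrow> 'a) \<Rightarrow> (nat \<Rightarrow> 'a) \<Rightarrow> bool" where
  "solves_recurrence a b y \<longleftrightarrow> (\<forall>k. a k * (y (Suc (Suc k)) + y k) = b k * y (Suc k))"

lemma solves_recurrence_diff:
  assumes "solves_recurrence a b u" "solves_recurrence a b v"
  shows "solves_recurrence a b (\<lambda>k. c * u k - d * v k)"
  unfolding solves_recurrence_def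
proof
  fix k
  have "a k * (c * u (Suc (Suc k)) - d * v (Suc (Suc k)) + (c * u k - d * v k))
      = c * (a k * (u (Suc (Suc k)) + u k)) - d * (a k * (v (Suc (Suc k)) + v k))"
    by (simp add: algebra_simps)
  also have "\<dots> = c * (b k * u (Suc k)) - d * (b k * v (Suc k))"
    using assms by (simp add: solves_recurrence_def)
  finally show "a k * (c * u (Suc (Suc k)) - d * v (Suc (Suc k)) + (c * u k - d * v k))
      = b k * (c * u (Suc k) - d * v (Suc k))"
    by (simp add: algebra_simps)
qed

lemma casoratian_Suc:
  fixes u v :: "nat \<Rightarrow> 'a::idom"
  assumes "solves_recurrence a b u" "solves_recurrence a b v" "a k \<noteq> 0"
  shows "casoratian u v (Suc k) = casoratian u v k"
proof -
  have "a k * (casoratian u v (Suc k) - casoratian u v k)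
      = u (Suc k) * (a k * (v (Suc (Suc k)) + v k)) - v (Suc k) * (a k * (u (Suc (Suc k)) + u k))"
    by (simp add: casoratian_def algebra_simps)
  also have "\<dots> = 0"
    using assms(1,2) by (simp add: solves_recurrence_def)
  finally show ?thesis using assms(3) by simp
qed

lemma casoratian_const:
  fixes u v :: "nat \<Rightarrow> 'a::idom"
  assumes "solves_recurrence a b u" "solves_recurrence a b v" "\<And>k. a k \<noteq> 0"
  shows "casoratian u v k = casoratian u v 0"
  by (induction k) (simp_all add: casoratian_Suc[OF assms])

lemma pp_Suc_eq_recurrence_solution:
  fixes Y :: "nat \<Rightarrow> complex"
  assumes rec: "solves_recurrence (\<lambda>k. 1 - of_real \<alpha> * of_real q ^ k)
                  (\<lambda>k. x * (1 - of_real \<beta> * of_real q ^ k)) Y"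
    and Y0: "Y 0 = 0"
    and \<beta>_nonzero: "\<And>k. 1 - of_real \<beta> * of_real q ^ k \<noteq> (0::complex)"
  shows "Y 1 * pp \<alpha> \<beta> q (Suc k) x
       = qpoch (of_real \<alpha>) (of_real q) k / qpoch (of_real \<beta>) (of_real q) k * Y (Suc k)"
proof -
  define g where "g j = (1 - of_real \<alpha> * of_real q ^ j) / (1 - of_real \<beta> * of_real q ^ j :: complex)" for j
  define h where "h j = qpoch (of_real \<alpha>) (of_real q) j / qpoch (of_real \<beta>) (of_real q) j" for j
  have g_gt: "complex_of_real (gt \<alpha> \<beta> q (int j)) = g j" for j
    by (simp add: gt_def g_def)
  have h_Suc: "h (Suc j) = h j * g j" for j
    by (simp add: h_def g_def qpoch_def)
  have g_rec: "g j * (Y (Suc (Suc j)) + Y j) = x * Y (Suc j)" for j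
    using rec \<beta>_nonzero[of j] by (simp add: solves_recurrence_def g_def field_simps)
  have "Y 1 * pp \<alpha> \<beta> q (Suc k) x = h k * Y (Suc k)
      \<and> Y 1 * pp \<alpha> \<beta> q (Suc (Suc k)) x = h (Suc k) * Y (Suc (Suc k))"
  proof (induction k)
    case 0
    show ?case using g_rec[of 0] Y0 by (simp add: h_def qpoch_def g_def)
  next
    case (Suc k)
    have "pp \<alpha> \<beta> q (Suc (Suc (Suc k))) x
        = x * pp \<alpha> \<beta> q (Suc (Suc k)) x - g k * g (Suc k) * pp \<alpha> \<beta> q (Suc k) x"
      using g_gt[of "Suc k"] by (simp add: g_gt)
    then have "Y 1 * pp \<alpha> \<beta> q (Suc (Suc (Suc k))) x
        = x * (Y 1 * pp \<alpha> \<beta> q (Suc (Suc k)) x) - g k * g (Suc k) * (Y 1 * pp \<alpha> \<beta> q (Suc k) x)"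
      by (simp add: algebra_simps)
    also have "\<dots> = x * (h (Suc k) * Y (Suc (Suc k))) - g k * g (Suc k) * (h k * Y (Suc k))"
      using Suc.IH by simp
    also have "\<dots> = h (Suc k) * (x * Y (Suc (Suc k)) - g (Suc k) * Y (Suc k))"
      by (simp add: h_Suc algebra_simps)
    also have "\<dots> = h (Suc k) * g (Suc k) * Y (Suc (Suc (Suc k)))"
      unfolding g_rec[of "Suc k", symmetric] by (simp add: algebra_simps)
    also have "\<dots> = h (Suc (Suc k)) * Y (Suc (Suc (Suc k)))"
      by (simp add: h_Suc)
    finally show ?case using Suc.IH by simp
  qed
  then show ?thesis by (simp add: h_def)
qed

definition phi_coeff :: "real \<Rightarrow> real \<Rightarrow> real \<Rightarrow> complex \<Rightarrow> nat \<Rightarrow> complex" where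
  "phi_coeff \<alpha> \<beta> q z k =
     apoch \<alpha> \<beta> q z k / (qpoch (of_real q * z^2) (of_real q) k * qpoch (of_real q) (of_real q) k)"

definition phi_coeff_ratio :: "real \<Rightarrow> real \<Rightarrow> real \<Rightarrow> complex \<Rightarrow> nat \<Rightarrow> complex" where
  "phi_coeff_ratio \<alpha> \<beta> q z k =
     (of_real \<alpha> * (1 + z^2 * of_real q ^ (2*k)) - of_real \<beta> * of_real q ^ k * (1 + z^2))
     / ((1 - of_real q * z^2 * of_real q ^ k) * (1 - of_real q * of_real q ^ k))"

lemma phi_eq_powser: "phi \<alpha> \<beta> q z t = (\<Sum>k. phi_coeff \<alpha> \<beta> q z k * t ^ k)"
  by (simp add: phi_def phi_coeff_def)

lemma phi_coeff_0 [simp]: "phi_coeff \<alpha> \<beta> q z 0 = 1"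
  by (simp add: phi_coeff_def apoch_def qpoch_def)

lemma phi_coeff_Suc: "phi_coeff \<alpha> \<beta> q z (Suc k) = phi_coeff \<alpha> \<beta> q z k * phi_coeff_ratio \<alpha> \<beta> q z k"
  by (simp add: phi_coeff_def phi_coeff_ratio_def apoch_def qpoch_def)

lemma phi_coeff_ratio_tendsto:
  assumes "0 < q" "q < 1"
  shows "phi_coeff_ratio \<alpha> \<beta> q z \<longlonglongrightarrow> of_real \<alpha>"
proof -
  have q_pow: "(\<lambda>k. (of_real q :: complex) ^ k) \<longlonglongrightarrow> 0"
    using assms by (intro LIMSEQ_power_zero) simp
  have "(\<lambda>k. (of_real \<alpha> * (1 + z^2 * (of_real q ^ k)^2) - of_real \<beta> * of_real q ^ k * (1 + z^2))
          / ((1 - of_real q * z^2 * of_real q ^ k) * (1 - of_real q * of_real q ^ k)))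
        \<longlonglongrightarrow> (of_real \<alpha> * (1 + z^2 * 0^2) - of_real \<beta> * 0 * (1 + z^2))
          / ((1 - of_real q * z^2 * 0) * (1 - of_real q * 0))"
    by (intro tendsto_intros q_pow) simp
  then show ?thesis
    by (simp add: phi_coeff_ratio_def[abs_def] power_even_eq)
qed

locale phi_parameters =
  fixes q \<alpha> \<beta> :: real and z :: complex
  assumes q_pos: "0 < q" and q_less_1: "q < 1" and abs_\<alpha>_less_1: "\<bar>\<alpha>\<bar> < 1"
    and denom_nonzero: "\<And>j. 1 - of_real q * z^2 * of_real q ^ j \<noteq> 0"
begin

lemma phi_coeff_Suc_mult_denom:
  "phi_coeff \<alpha> \<beta> q z (Suc k) * ((1 - of_real q * z^2 * of_real q ^ k) * (1 - of_real q * of_real q ^ k))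
   = phi_coeff \<alpha> \<beta> q z k
     * (of_real \<alpha> * (1 + z^2 * of_real q ^ (2*k)) - of_real \<beta> * of_real q ^ k * (1 + z^2))"
proof -
  have "1 - of_real q * of_real q ^ k \<noteq> (0::complex)"
    using one_minus_of_real_mult_power_neq_zero[of q q k] q_pos q_less_1 by simp
  then show ?thesis
    using denom_nonzero[of k] by (simp add: phi_coeff_Suc phi_coeff_ratio_def)
qed

lemma summable_norm_phi_coeff: "summable (\<lambda>k. norm (phi_coeff \<alpha> \<beta> q z k))"
proof -
  define c where "c = (1 + \<bar>\<alpha>\<bar>) / 2"
  have "c < 1" "\<bar>\<alpha>\<bar> < c" using abs_\<alpha>_less_1 by (auto simp: c_def)
  have "(\<lambda>k. norm (phi_coeff_ratio \<alpha> \<beta> q z k)) \<longlonglongrightarrow> norm (of_real \<alpha> :: complex)"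
    using phi_coeff_ratio_tendsto q_pos q_less_1 by (intro tendsto_norm)
  then have "eventually (\<lambda>k. norm (phi_coeff_ratio \<alpha> \<beta> q z k) < c) sequentially"
    using \<open>\<bar>\<alpha>\<bar> < c\<close> by (intro order_tendstoD) auto
  then obtain N where N: "\<And>k. k \<ge> N \<Longrightarrow> norm (phi_coeff_ratio \<alpha> \<beta> q z k) \<le> c"
    unfolding eventually_sequentially by (meson less_imp_le)
  show ?thesis
  proof (rule summable_ratio_test[OF \<open>c < 1\<close>])
    fix k assume "k \<ge> N"
    have "norm (phi_coeff \<alpha> \<beta> q z (Suc k))
        = norm (phi_coeff \<alpha> \<beta> q z k) * norm (phi_coeff_ratio \<alpha> \<beta> q z k)"
      by (simp add: phi_coeff_Suc norm_mult)
    also have "\<dots> \<le> norm (phi_coeff \<alpha> \<beta> q z k) * c"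
      using N[OF \<open>k \<ge> N\<close>] by (simp add: mult_left_mono)
    finally show "norm (norm (phi_coeff \<alpha> \<beta> q z (Suc k))) \<le> c * norm (norm (phi_coeff \<alpha> \<beta> q z k))"
      by (simp add: mult.commute)
  qed
qed

lemma summable_phi_coeff:
  assumes "norm t \<le> 1"
  shows "summable (\<lambda>k. phi_coeff \<alpha> \<beta> q z k * t ^ k)"
  by (rule summable_comparison_test'[OF summable_norm_phi_coeff, of 0])
     (use assms in \<open>auto simp: norm_mult norm_power intro!: mult_left_le power_le_one\<close>)

lemma phi_sums:
  assumes "norm t \<le> 1"
  shows "(\<lambda>k. phi_coeff \<alpha> \<beta> q z k * t ^ k) sums phi \<alpha> \<beta> q z t"
  unfolding phi_eq_powser using summable_phi_coeff[OF assms] by (rule summable_sums)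

lemma phi_power_q_tendsto_1: "(\<lambda>n. phi \<alpha> \<beta> q z (of_real q ^ n)) \<longlonglongrightarrow> 1"
proof -
  have "isCont (\<lambda>t. \<Sum>k. phi_coeff \<alpha> \<beta> q z k * t ^ k) 0"
    by (rule isCont_powser[of _ 1]) (use summable_phi_coeff[of 1] in simp_all)
  moreover have "(\<lambda>n. (of_real q :: complex) ^ n) \<longlonglongrightarrow> 0"
    using q_pos q_less_1 by (intro LIMSEQ_power_zero) simp
  ultimately show ?thesis
    unfolding phi_eq_powser using isCont_tendsto_compose by fastforce
qed

lemma phi_q_difference:
  assumes t: "norm t \<le> 1"
  shows "(1 - of_real \<alpha> * t) * (phi \<alpha> \<beta> q z t + z^2 * phi \<alpha> \<beta> q z ((of_real q)^2 * t))
       = (1 + z^2) * (1 - of_real \<beta> * t) * phi \<alpha> \<beta> q z (of_real q * t)"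
proof -
  define Q where "Q = (of_real q :: complex)"
  define c where "c = phi_coeff \<alpha> \<beta> q z"
  define P V R where "P = phi \<alpha> \<beta> q z t" "V = phi \<alpha> \<beta> q z (Q * t)" "R = phi \<alpha> \<beta> q z (Q^2 * t)"
  have "norm Q \<le> 1" using q_pos q_less_1 by (simp add: Q_def)
  then have "norm (Q * t) \<le> 1" "norm (Q^2 * t) \<le> 1"
    using t by (auto simp: norm_mult norm_power intro!: mult_le_one power_le_one)
  then have sums: "(\<lambda>k. c k * t^k) sums P" "(\<lambda>k. c k * (Q * t)^k) sums V" "(\<lambda>k. c k * (Q^2 * t)^k) sums R"
    unfolding c_def P_V_R_def using phi_sums t by blast+
  define g where "g k = c k * t^k * ((1 - Q^k) * (1 - z^2 * Q^k))" for k
  have "g = (\<lambda>k. c k * t^k - (1 + z^2) * (c k * (Q * t)^k) + z^2 * (c k * (Q^2 * t)^k))"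
    by (simp add: fun_eq_iff g_def power_mult_distrib power2_eq_square algebra_simps)
  then have g_sums: "g sums (P - (1 + z^2) * V + z^2 * R)"
    by (simp only:) (intro sums_add sums_diff sums_mult sums)
  have g_Suc: "g (Suc k) = t * (of_real \<alpha> * (c k * t^k) - of_real \<beta> * (1 + z^2) * (c k * (Q * t)^k)
        + of_real \<alpha> * z^2 * (c k * (Q^2 * t)^k))" for k
  proof -
    have "g (Suc k) = c (Suc k) * ((1 - of_real q * z^2 * of_real q ^ k) * (1 - of_real q * of_real q ^ k)) * t ^ Suc k"
      by (simp add: g_def Q_def algebra_simps)
    also have "\<dots> = c k * (of_real \<alpha> * (1 + z^2 * Q ^ (2*k)) - of_real \<beta> * Q ^ k * (1 + z^2)) * t ^ Suc k"
      unfolding c_def phi_coeff_Suc_mult_denom Q_def ..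
    also have "Q ^ (2*k) = Q^k * Q^k"
      by (simp add: mult_2 power_add)
    finally show ?thesis
      by (simp add: power_mult_distrib power2_eq_square algebra_simps)
  qed
  then have "(\<lambda>k. g (Suc k)) sums (t * (of_real \<alpha> * P - of_real \<beta> * (1 + z^2) * V + of_real \<alpha> * z^2 * R))"
    unfolding g_Suc by (intro sums_add sums_diff sums_mult sums)
  then have "g sums (t * (of_real \<alpha> * P - of_real \<beta> * (1 + z^2) * V + of_real \<alpha> * z^2 * R))"
    by (subst (asm) sums_Suc_iff) (simp add: g_def)
  with g_sums have "P - (1 + z^2) * V + z^2 * R
      = t * (of_real \<alpha> * P - of_real \<beta> * (1 + z^2) * V + of_real \<alpha> * z^2 * R)"
    by (rule sums_unique2)
  then show ?thesis
    unfolding P_V_R_def Q_def by (simp add: algebra_simps)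
qed

lemma solves_recurrence_phi:
  assumes "z \<noteq> 0"
  shows "solves_recurrence (\<lambda>k. 1 - of_real \<alpha> * of_real q ^ k)
           (\<lambda>k. (z + inverse z) * (1 - of_real \<beta> * of_real q ^ k))
           (\<lambda>k. z ^ k * phi \<alpha> \<beta> q z (of_real q ^ k))"
  unfolding solves_recurrence_def
proof
  fix k
  let ?a = "1 - of_real \<alpha> * of_real q ^ k :: complex"
  let ?b = "1 - of_real \<beta> * of_real q ^ k :: complex"
  let ?A = "\<lambda>j. phi \<alpha> \<beta> q z (of_real q ^ j)"
  have "norm ((of_real q :: complex) ^ k) \<le> 1"
    using q_pos q_less_1 by (simp add: norm_power power_le_one)
  from phi_q_difference[OF this]
  have qd: "?a * (?A k + z^2 * ?A (Suc (Suc k))) = (1 + z^2) * ?b * ?A (Suc k)"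
    by (simp add: power2_eq_square mult.assoc)
  have "?a * (z ^ Suc (Suc k) * ?A (Suc (Suc k)) + z ^ k * ?A k)
      = z ^ k * (?a * (?A k + z^2 * ?A (Suc (Suc k))))"
    by (simp add: power2_eq_square algebra_simps)
  also have "\<dots> = (z + inverse z) * ?b * (z ^ Suc k * ?A (Suc k))"
    unfolding qd using assms by (simp add: field_simps power2_eq_square)
  finally show "?a * (z ^ Suc (Suc k) * ?A (Suc (Suc k)) + z ^ k * ?A k)
      = (z + inverse z) * ?b * (z ^ Suc k * ?A (Suc k))" .
qed

end

lemma exceptional_inverse: "exceptional q (inverse z) \<longleftrightarrow> exceptional q z"
proof -
  have "inverse z ^ 2 = of_real q powi m \<longleftrightarrow> z ^ 2 = of_real q powi (- m)" for m
    by (metis inverse_inverse_eq power_int_minus power_inverse)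
  then show ?thesis
    unfolding exceptional_def by (metis minus_minus)
qed

lemma not_exceptional_denom_nonzero:
  assumes "\<not> exceptional q z"
  shows "1 - of_real q * z^2 * of_real q ^ j \<noteq> 0"
proof
  assume "1 - of_real q * z^2 * of_real q ^ j = 0"
  then have "of_real q ^ Suc j * z^2 = 1"
    by (simp add: algebra_simps)
  then have "z^2 = inverse (of_real q ^ Suc j)"
    by (metis inverse_unique)
  also have "\<dots> = of_real q powi (- int (Suc j))"
    by (simp only: power_int_minus power_int_of_nat)
  finally have "z^2 = of_real q powi (- int (Suc j))" .
  with assms show False
    unfolding exceptional_def by blast
qed

locale non_exceptional_point =
  fixes q \<alpha> \<beta> :: real and z :: complex
  assumes q_pos: "0 < q" and q_less_1: "q < 1" and abs_\<alpha>_less_1: "\<bar>\<alpha>\<bar> < 1"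
    and z_nonzero: "z \<noteq> 0" and not_exceptional: "\<not> exceptional q z"
begin

sublocale Z: phi_parameters q \<alpha> \<beta> z
  using q_pos q_less_1 abs_\<alpha>_less_1 not_exceptional_denom_nonzero[OF not_exceptional]
  by unfold_locales auto

sublocale W: phi_parameters q \<alpha> \<beta> "inverse z"
  using q_pos q_less_1 abs_\<alpha>_less_1 not_exceptional not_exceptional_denom_nonzero[of q "inverse z"]
  by unfold_locales (auto simp: exceptional_inverse)

lemma solves_recurrence_phi_inverse:
  "solves_recurrence (\<lambda>k. 1 - of_real \<alpha> * of_real q ^ k)
     (\<lambda>k. (z + inverse z) * (1 - of_real \<beta> * of_real q ^ k))
     (\<lambda>k. inverse z ^ k * phi \<alpha> \<beta> q (inverse z) (of_real q ^ k))"
  using W.solves_recurrence_phi z_nonzero by (simp add: add.commute)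

lemma phi_casoratian:
  "inverse z * phi \<alpha> \<beta> q z 1 * phi \<alpha> \<beta> q (inverse z) (of_real q)
   - z * phi \<alpha> \<beta> q z (of_real q) * phi \<alpha> \<beta> q (inverse z) 1 = inverse z - z"
proof -
  define A B where "A = phi \<alpha> \<beta> q z" "B = phi \<alpha> \<beta> q (inverse z)"
  define u v where "u k = z ^ k * A (of_real q ^ k)" "v k = inverse z ^ k * B (of_real q ^ k)" for k
  have cas: "casoratian u v k = inverse z * A (of_real q ^ k) * B (of_real q ^ Suc k)
                               - z * A (of_real q ^ Suc k) * B (of_real q ^ k)" for k
    using z_nonzero by (simp add: casoratian_def u_v_def power_inverse field_simps)
  have "1 - of_real \<alpha> * of_real q ^ k \<noteq> (0::complex)" for k
    using one_minus_of_real_mult_power_neq_zero[of \<alpha> q k] q_pos q_less_1 abs_\<alpha>_less_1 by simp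
  then have const: "casoratian u v k = casoratian u v 0" for k
    using casoratian_const Z.solves_recurrence_phi[OF z_nonzero] solves_recurrence_phi_inverse
    unfolding u_v_def A_B_def by blast
  have "casoratian u v \<longlonglongrightarrow> inverse z * 1 * 1 - z * 1 * 1"
    unfolding cas[abs_def] A_B_def
    by (intro tendsto_intros Z.phi_power_q_tendsto_1 W.phi_power_q_tendsto_1 LIMSEQ_Suc)
  moreover have "casoratian u v \<longlonglongrightarrow> casoratian u v 0"
    by (rule Lim_transform_eventually[OF tendsto_const]) (intro always_eventually allI, rule const[symmetric])
  ultimately have "casoratian u v 0 = inverse z - z"
    using LIMSEQ_unique by fastforce
  then show ?thesis
    using cas[of 0] by (simp add: A_B_def)
qed

lemma pol_eq_rhs:
  assumes "\<beta> < 1" "n \<ge> -1"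
  shows "pol n \<alpha> \<beta> q (z + inverse z) = rhs n \<alpha> \<beta> q z"
proof -
  obtain m where n: "n + 1 = int m"
    using assms(2) zero_le_imp_eq_int[of "n + 1"] by auto
  define A B where "A = phi \<alpha> \<beta> q z" "B = phi \<alpha> \<beta> q (inverse z)"
  define Y where "Y k = A 1 * (inverse z ^ k * B (of_real q ^ k)) - B 1 * (z ^ k * A (of_real q ^ k))" for k
  have "solves_recurrence (\<lambda>k. 1 - of_real \<alpha> * of_real q ^ k)
          (\<lambda>k. (z + inverse z) * (1 - of_real \<beta> * of_real q ^ k)) Y"
    unfolding Y_def A_B_def
    using solves_recurrence_phi_inverse Z.solves_recurrence_phi[OF z_nonzero]
    by (rule solves_recurrence_diff)
  moreover have "Y 0 = 0" by (simp add: Y_def)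
  moreover have "1 - of_real \<beta> * of_real q ^ k \<noteq> (0::complex)" for k
    using one_minus_of_real_mult_power_neq_zero[of \<beta> q k] assms(1) q_pos q_less_1 by simp
  ultimately have pp_sol: "Y 1 * pp \<alpha> \<beta> q (Suc k) (z + inverse z)
      = qpoch (of_real \<alpha>) (of_real q) k / qpoch (of_real \<beta>) (of_real q) k * Y (Suc k)" for k
    by (rule pp_Suc_eq_recurrence_solution)
  have Y1: "Y 1 = inverse z - z"
    using phi_casoratian by (simp add: Y_def A_B_def algebra_simps)
  have "z^2 \<noteq> of_real q powi 0"
    using not_exceptional unfolding exceptional_def by blast
  then have "Y 1 \<noteq> 0"
    using z_nonzero unfolding Y1 by (auto simp: field_simps power2_eq_square)
  show ?thesis
  proof (cases m)
    case 0
    then have "n = -1" using n by simp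
    then show ?thesis by (simp add: pol_def rhs_def)
  next
    case (Suc k)
    then have "n = int k" using n by simp
    have "- n - 1 = - int (Suc k)" "n + 1 = int (Suc k)"
      using \<open>n = int k\<close> by simp_all
    then have "z powi (- n - 1) = inverse z ^ Suc k" "z powi (n + 1) = z ^ Suc k"
      by (simp_all only: power_int_minus power_int_of_nat power_inverse)
    moreover have "nat (n + 1) = Suc k"
      using \<open>n = int k\<close> by simp
    ultimately have "rhs n \<alpha> \<beta> q z
        = 1 / Y 1 * (qpoch (of_real \<alpha>) (of_real q) k / qpoch (of_real \<beta>) (of_real q) k * Y (Suc k))"
      using \<open>n = int k\<close> unfolding Y1 by (simp add: rhs_def qpochZ_def Y_def A_B_def mult_ac)
    also have "\<dots> = 1 / Y 1 * (Y 1 * pp \<alpha> \<beta> q (Suc k) (z + inverse z))"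
      by (simp only: pp_sol)
    also have "\<dots> = pol n \<alpha> \<beta> q (z + inverse z)"
      using \<open>Y 1 \<noteq> 0\<close> \<open>nat (n + 1) = Suc k\<close> by (simp add: pol_def)
    finally show ?thesis ..
  qed
qed

end

lemma isCont_pp: "isCont (pp \<alpha> \<beta> q k) x"
proof (induction \<alpha> \<beta> q k x rule: pp.induct)
  case (3 \<alpha> \<beta> q k x)
  have "pp \<alpha> \<beta> q (Suc (Suc k)) = (\<lambda>x. x * pp \<alpha> \<beta> q (Suc k) x
          - complex_of_real (gt \<alpha> \<beta> q (int k - 1) * gt \<alpha> \<beta> q (int k)) * pp \<alpha> \<beta> q k x)"
    by (rule ext) simp
  then show ?case
    using "3.IH" by (simp add: continuous_intros)
qed simp_all

theorem proposition2p5: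
  fixes q \<alpha> \<beta> :: real and z :: complex and n :: int
  assumes "0 < q" "q < 1" "-1 < \<alpha>" "\<alpha> < 1" "\<beta> < 1" "z \<noteq> 0" "n \<ge> -1"
  shows "(\<not> exceptional q z \<longrightarrow> pol n \<alpha> \<beta> q (z + inverse z) = rhs n \<alpha> \<beta> q z)
       \<and> (rhs n \<alpha> \<beta> q \<longlongrightarrow> pol n \<alpha> \<beta> q (z + inverse z))
            (at z within {w. w \<noteq> 0 \<and> \<not> exceptional q w})"
proof -
  have pol_eq: "pol n \<alpha> \<beta> q (w + inverse w) = rhs n \<alpha> \<beta> q w"
    if "w \<noteq> 0" "\<not> exceptional q w" for w
  proof -
    interpret non_exceptional_point q \<alpha> \<beta> w
      using assms that by unfold_locales auto
    show ?thesis using assms(5,7) by (rule pol_eq_rhs)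
  qed
  have "isCont (\<lambda>w. pol n \<alpha> \<beta> q (w + inverse w)) z"
    unfolding pol_def using assms(6)
    by (intro continuous_intros isCont_o2[OF _ isCont_pp]) auto
  then have "((\<lambda>w. pol n \<alpha> \<beta> q (w + inverse w)) \<longlongrightarrow> pol n \<alpha> \<beta> q (z + inverse z))
      (at z within {w. w \<noteq> 0 \<and> \<not> exceptional q w})"
    using continuous_at_imp_continuous_at_within unfolding continuous_within by blast
  moreover have "eventually (\<lambda>w. pol n \<alpha> \<beta> q (w + inverse w) = rhs n \<alpha> \<beta> q w)
      (at z within {w. w \<noteq> 0 \<and> \<not> exceptional q w})"
    by (auto simp: eventually_at_filter pol_eq)
  ultimately have "(rhs n \<alpha> \<beta> q \<longlongrightarrow> pol n \<alpha> \<beta> q (z + inverse z))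
      (at z within {w. w \<noteq> 0 \<and> \<not> exceptional q w})"
    by (rule Lim_transform_eventually)
  then show ?thesis
    using pol_eq assms(6) by blast
qed

end
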